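(* Let $\Omega\subset\mathbb{R}^2$ have property (i). Then: 1. $\Omega$ has property $( * )$ if and only if $\Omega^\diamond$ has property $( ** )$. 2. $\Omega^\diamond$ has property $( * )$ if and only if $\Omega$ has property $( ** )$.
   Context: Points of $\mathbb{R}^2$ are written $(x,y)$, points of the dual $\mathbb{R}^{2*}$ as $(p,q)$. The antipolar of $\Omega\subset\mathbb{R}^2$ is $\Omega^\diamond=\{(p,q)\in\mathbb{R}^{2*}: px-qy\ge1\ \forall(x,y)\in\Omega\}$. For a set $\Sigma$ (in $\mathbb{R}^2$ or in $\mathbb{R}^{2*}$): property (i): $\Sigma$ is nonempty, convex, closed, $0\notin\Sigma$, and $\lambda\Sigma\subset\Sigma$ for all $\lambda>1$. Property $( * )$: $\lambda\Sigma\cap\partial\Sigma=\varnothing$ for all $\lambda>1$ (no ray issued from the origin lies on $\partial\Sigma$). Property $( ** )$: letting $C=\operatorname{cl}(\mathbb{R}_+\Sigma)$ with $\mathbb{R}_+=[0,\infty)$, and $\partial C=l_0\cup l_1$ with $l_0,l_1$ the two (possibly coinciding) boundary rays of the closed cone $C$, one has $\operatorname{dist}(l_0,\Sigma)=\operatorname{dist}(l_1,\Sigma)=0$. *)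

theory Defs
  imports "HOL-Analysis.Analysis"
begin

text \<open>Points of R^2 and of its dual are both modelled as real \<times> real.\<close>

definition antipolar :: "(real \<times> real) set \<Rightarrow> (real \<times> real) set" where
  "antipolar \<Omega> = {(p, q). \<forall>(x, y) \<in> \<Omega>. p * x - q * y \<ge> 1}"

definition prop_i :: "(real \<times> real) set \<Rightarrow> bool" where
  "prop_i \<Sigma> \<longleftrightarrow> \<Sigma> \<noteq> {} \<and> convex \<Sigma> \<and> closed \<Sigma> \<and> 0 \<notin> \<Sigma> \<and>
     (\<forall>c::real. c > 1 \<longrightarrow> (\<lambda>x. c *\<^sub>R x) ` \<Sigma> \<subseteq> \<Sigma>)"

definition prop_star :: "(real \<times> real) set \<Rightarrow> bool" where
  "prop_star \<Sigma> \<longleftrightarrow> (\<forall>c::real. c > 1 \<longrightarrow> (\<lambda>x. c *\<^sub>R x) ` \<Sigma> \<inter> frontier \<Sigma> = {})"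

definition ray :: "real \<times> real \<Rightarrow> (real \<times> real) set" where
  "ray u = (\<lambda>t. t *\<^sub>R u) ` {0..}"

definition cone_cl :: "(real \<times> real) set \<Rightarrow> (real \<times> real) set" where
  "cone_cl \<Sigma> = closure {t *\<^sub>R x | t x. t \<ge> 0 \<and> x \<in> \<Sigma>}"

definition prop_starstar :: "(real \<times> real) set \<Rightarrow> bool" where
  "prop_starstar \<Sigma> \<longleftrightarrow> (\<exists>u0 u1. u0 \<noteq> 0 \<and> u1 \<noteq> 0 \<and>
      frontier (cone_cl \<Sigma>) = ray u0 \<union> ray u1 \<and>
      setdist (ray u0) \<Sigma> = 0 \<and> setdist (ray u1) \<Sigma> = 0)"

end

theory Submission
  imports Defs
begin

text \<open>
  Write \<open>\<langle>(p, q), (x, y)\<rangle> = p x - q y\<close>. The closed cone generated by \<open>\<Omega>\<^sup>\<diamond>\<close> is the dual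
  cone \<open>K = {\<xi>. \<langle>\<xi>, z\<rangle> \<ge> 0 for all z \<in> \<Omega>}\<close>. Any \<open>z \<in> \<Omega>\<close> is positive on \<open>\<Omega>\<^sup>\<diamond>\<close>, so
  \<open>K\<close> is a closed convex cone in a half-plane, and its boundary consists of the two rays
  through the elements of \<open>K\<close> of smallest and largest angle.

  \<open>\<Omega>\<close> fails \<open>(*)\<close> exactly when some nonzero \<open>\<xi> \<in> K\<close> vanishes at a point \<open>z \<in> \<Omega>\<close>, i.e.
  when a line through the origin supports \<open>\<Omega>\<close> at a point of \<open>\<Omega>\<close>. Such a \<open>\<xi>\<close> lies on a
  boundary ray of \<open>K\<close>, and \<open>\<langle>\<eta>, z\<rangle> \<ge> 1\<close> on \<open>\<Omega>\<^sup>\<diamond>\<close> keeps that ray at distance at least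
  \<open>1 / |z|\<close> from \<open>\<Omega>\<^sup>\<diamond>\<close>. Conversely, if a boundary direction \<open>u\<close> is positive on \<open>\<Omega>\<close> but
  its ray stays away from \<open>\<Omega>\<^sup>\<diamond>\<close>, a line separating \<open>0\<close> from \<open>\<Omega>\<^sup>\<diamond> - ray u\<close> gives, by the
  bipolar theorem \<open>\<Omega>\<^sup>\<diamond>\<^sup>\<diamond> = \<Omega>\<close>, a point of \<open>\<Omega>\<close> where \<open>u\<close> is \<open>\<le> 0\<close>. Part 2 is part 1
  applied to \<open>\<Omega>\<^sup>\<diamond>\<close>.
\<close>

lemma frontier_if_supporting_hyperplane:
  fixes S :: "'a::euclidean_space set"
  assumes "b \<noteq> 0" "\<And>x. x \<in> S \<Longrightarrow> 0 \<le> b \<bullet> x" "z \<in> S" "b \<bullet> z = 0"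
  shows "z \<in> frontier S"
proof -
  have "interior S \<subseteq> {x. 0 < b \<bullet> x}"
    using interior_mono[of S "{x. 0 \<le> b \<bullet> x}"] assms(1,2) by auto
  then show ?thesis
    using assms(3,4) closure_subset by (auto simp: frontier_def)
qed

lemma supporting_hyperplane_frontier:
  fixes S :: "'a::euclidean_space set"
  assumes "convex S" "z \<in> frontier S"
  obtains a where "a \<noteq> 0" "\<And>x. x \<in> S \<Longrightarrow> a \<bullet> z \<le> a \<bullet> x"
proof (cases "interior S = {}")
  case True
  then obtain a b where "a \<noteq> 0" "S \<subseteq> {x. a \<bullet> x = b}"
    using empty_interior_subset_hyperplane[OF assms(1)] by blast
  moreover have "z \<in> {x. a \<bullet> x = b}"
    using assms(2) closure_minimal[OF \<open>S \<subseteq> _\<close> closed_hyperplane] by (auto simp: frontier_def)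
  ultimately have "\<And>x. x \<in> S \<Longrightarrow> a \<bullet> z \<le> a \<bullet> x" by auto
  with \<open>a \<noteq> 0\<close> show ?thesis by (rule that)
next
  case False
  then have "rel_interior S = interior S"
    by (rule rel_interior_nonempty_interior)
  with assms(2) have "z \<in> closure S" "z \<notin> rel_interior S"
    by (simp_all add: frontier_def)
  then obtain a where "a \<noteq> 0" and a: "\<And>y. y \<in> closure S \<Longrightarrow> a \<bullet> z \<le> a \<bullet> y"
    by (rule supporting_hyperplane_relative_frontier[OF assms(1)]) auto
  show ?thesis
    by (rule that[OF \<open>a \<noteq> 0\<close> a[OF closure_subset[THEN subsetD]]])
qed

lemma ray_iff: "y \<in> ray u \<longleftrightarrow> (\<exists>t\<ge>0. y = t *\<^sub>R u)"
  by (auto simp: ray_def)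

lemma zero_in_ray [simp]: "0 \<in> ray u"
  by (auto simp: ray_iff intro: exI[of _ 0])

lemma ray_iff_pos: "y \<noteq> 0 \<Longrightarrow> y \<in> ray u \<longleftrightarrow> (\<exists>t>0. y = t *\<^sub>R u)"
  by (force simp: ray_iff order_le_less)

lemma zero_notin_closure_differences:
  fixes S T :: "'a::real_normed_vector set"
  assumes "0 < setdist S T"
  shows "0 \<notin> closure (\<Union>y\<in>T. \<Union>x\<in>S. {y - x})"
proof
  assume "0 \<in> closure (\<Union>y\<in>T. \<Union>x\<in>S. {y - x})"
  then obtain x y where "x \<in> S" "y \<in> T" "norm (y - x) < setdist S T"
    using assms by (auto simp: closure_approachable)
  with setdist_le_dist[of x S y T] show False
    by (simp add: dist_norm norm_minus_commute)
qed

lemma convex_ray: "convex (ray u)"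
  unfolding ray_def
  by (intro convex_linear_image convex_real_interval bounded_linear.linear[OF bounded_linear_scaleR_left])

section \<open>Closed convex cones in a half-plane\<close>

definition cross2 :: "real \<times> real \<Rightarrow> real \<times> real \<Rightarrow> real" where
  "cross2 u v = fst u * snd v - snd u * fst v"

lemma cross2_eq_inner: "cross2 u v = (- snd u, fst u) \<bullet> v"
  by (simp add: cross2_def inner_prod_def)

lemma cross2_antisym: "cross2 v u = - cross2 u v"
  by (simp add: cross2_def)

lemma cross2_scaleR_left [simp]: "cross2 (c *\<^sub>R u) v = c * cross2 u v"
  and cross2_scaleR_right [simp]: "cross2 u (c *\<^sub>R v) = c * cross2 u v"
  and cross2_minus_right [simp]: "cross2 u (- v) = - cross2 u v"
  and cross2_self [simp]: "cross2 u u = 0"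
  and cross2_zero_right [simp]: "cross2 u 0 = 0"
  by (simp_all add: cross2_def algebra_simps)

lemma cross2_eq_0_imp_parallel:
  assumes "cross2 u x = 0" shows "(u \<bullet> u) *\<^sub>R x = (u \<bullet> x) *\<^sub>R u"
  using assms by (simp add: cross2_def inner_prod_def prod_eq_iff algebra_simps)

lemma cross2_Cramer: "cross2 p q *\<^sub>R x = cross2 x q *\<^sub>R p + cross2 p x *\<^sub>R q"
  by (simp add: cross2_def prod_eq_iff algebra_simps)

lemma cross2_in_frame: "(a \<bullet> a) * cross2 x y = (a \<bullet> x) * cross2 a y - cross2 a x * (a \<bullet> y)"
  by (simp add: cross2_def inner_prod_def algebra_simps)

lemma inner_cross2_Lagrange: "(a \<bullet> x)\<^sup>2 + (cross2 a x)\<^sup>2 = (a \<bullet> a) * (x \<bullet> x)"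
  by (simp add: cross2_def inner_prod_def power2_eq_square algebra_simps)

lemma mult_le_mult_on_circle:
  fixes \<alpha> \<beta> \<gamma> \<delta> :: real
  assumes "0 \<le> \<alpha>" "0 \<le> \<gamma>" "\<alpha>\<^sup>2 + \<beta>\<^sup>2 = \<gamma>\<^sup>2 + \<delta>\<^sup>2" "\<beta> \<le> \<delta>"
  shows "\<beta> * \<gamma> \<le> \<alpha> * \<delta>"
proof -
  consider "\<beta> \<le> 0" "0 \<le> \<delta>" | "0 < \<beta>" | "\<delta> < 0"
    by linarith
  then show ?thesis
  proof cases
    case 1
    then show ?thesis
      using mult_nonpos_nonneg[of \<beta> \<gamma>] mult_nonneg_nonneg[of \<alpha> \<delta>] assms(1,2) by linarith
  next
    case 2
    then have "\<beta>\<^sup>2 \<le> \<delta>\<^sup>2"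
      using assms(4) power_mono[of \<beta> \<delta> 2] by simp
    then have "\<gamma>\<^sup>2 \<le> \<alpha>\<^sup>2" using assms(3) by linarith
    then have "\<gamma> \<le> \<alpha>" using assms(1) by (rule power2_le_imp_le)
    have "\<beta> * \<gamma> \<le> \<beta> * \<alpha>"
      using 2 \<open>\<gamma> \<le> \<alpha>\<close> by (simp add: mult_left_mono)
    also have "\<dots> \<le> \<alpha> * \<delta>"
      using assms(1,4) by (simp add: mult.commute mult_left_mono)
    finally show ?thesis .
  next
    case 3
    then have "\<delta>\<^sup>2 \<le> \<beta>\<^sup>2"
      using 3 assms(4) power_mono[of "- \<delta>" "- \<beta>" 2] by simp
    then have "\<alpha>\<^sup>2 \<le> \<gamma>\<^sup>2" using assms(3) by linarith
    then have "\<alpha> \<le> \<gamma>" using assms(2) by (rule power2_le_imp_le)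
    have "\<beta> * \<gamma> \<le> \<delta> * \<gamma>"
      using assms(2,4) by (simp add: mult_right_mono)
    also have "\<dots> \<le> \<alpha> * \<delta>"
      using 3 \<open>\<alpha> \<le> \<gamma>\<close> by (simp add: mult.commute mult_left_mono_neg)
    finally show ?thesis .
  qed
qed

lemma cross2_nonneg_on_half_circle:
  assumes "a \<noteq> 0" "0 \<le> a \<bullet> x" "0 \<le> a \<bullet> y" "norm x = norm y" "cross2 a x \<le> cross2 a y"
  shows "0 \<le> cross2 x y"
proof -
  have "(a \<bullet> x)\<^sup>2 + (cross2 a x)\<^sup>2 = (a \<bullet> y)\<^sup>2 + (cross2 a y)\<^sup>2"
    using assms(4) by (simp add: inner_cross2_Lagrange flip: power2_norm_eq_inner)
  then have "cross2 a x * (a \<bullet> y) \<le> (a \<bullet> x) * cross2 a y"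
    by (rule mult_le_mult_on_circle[OF assms(2,3) _ assms(5)])
  then have "0 \<le> (a \<bullet> a) * cross2 x y"
    by (simp add: cross2_in_frame)
  moreover have "0 < a \<bullet> a"
    using assms(1) by simp
  ultimately show ?thesis
    by (simp add: zero_le_mult_iff)
qed

lemma convex_cone_mem_if_between:
  assumes "convex_cone K" "p \<in> K" "q \<in> K" "0 < cross2 p q" "0 \<le> cross2 p x" "0 \<le> cross2 x q"
  shows "x \<in> K"
proof -
  have "x = inverse (cross2 p q) *\<^sub>R (cross2 x q *\<^sub>R p + cross2 p x *\<^sub>R q)"
    using assms(4) by (simp flip: cross2_Cramer)
  then have "x = (cross2 x q / cross2 p q) *\<^sub>R p + (cross2 p x / cross2 p q) *\<^sub>R q"
    by (simp add: scaleR_add_right divide_inverse_commute)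
  moreover have "(cross2 x q / cross2 p q) *\<^sub>R p \<in> K" "(cross2 p x / cross2 p q) *\<^sub>R q \<in> K"
    using assms by (simp_all add: convex_cone_scaleR)
  ultimately show ?thesis
    by (metis convex_cone_add[OF assms(1)])
qed

lemma interior_if_strictly_between:
  assumes "convex_cone K" "u \<in> K" "v \<in> K" "\<xi> \<in> K" "0 < cross2 u \<xi>" "0 < cross2 \<xi> v"
  shows "\<xi> \<in> interior K"
proof (rule interiorI)
  let ?U = "{x. 0 < cross2 u x} \<inter> {x. 0 < cross2 x v}"
  show "open ?U"
    unfolding cross2_def by (intro open_Int open_Collect_less continuous_intros)
  show "\<xi> \<in> ?U"
    using assms(5,6) by simp
  show "?U \<subseteq> K"
  proof
    fix x assume x: "x \<in> ?U"
    show "x \<in> K"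
    proof (cases "0 \<le> cross2 \<xi> x")
      case True
      with x show ?thesis
        by (intro convex_cone_mem_if_between[OF assms(1,4,3) assms(6)]) auto
    next
      case False
      with x show ?thesis
        by (intro convex_cone_mem_if_between[OF assms(1,2,4) assms(5)])
          (auto simp: cross2_antisym[of x])
    qed
  qed
qed

lemma ray_subset_frontier_if_extreme:
  fixes \<sigma> :: real
  assumes "convex_cone K" "u \<in> K" "u \<noteq> 0" "\<sigma> \<noteq> 0" "\<And>p. p \<in> K \<Longrightarrow> 0 \<le> \<sigma> * cross2 u p"
  shows "ray u \<subseteq> frontier K"
proof
  fix x assume "x \<in> ray u"
  then obtain t where "0 \<le> t" "x = t *\<^sub>R u"
    by (auto simp: ray_iff)
  let ?b = "\<sigma> *\<^sub>R (- snd u, fst u)"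
  have "?b \<noteq> 0"
    using assms(3,4) by (cases u) (auto simp: zero_prod_def)
  moreover have "\<And>p. p \<in> K \<Longrightarrow> 0 \<le> ?b \<bullet> p"
    by (simp only: inner_scaleR_left cross2_eq_inner[symmetric] assms(5))
  moreover have "x \<in> K"
    using assms(1,2) \<open>0 \<le> t\<close> \<open>x = t *\<^sub>R u\<close> by (simp add: convex_cone_scaleR)
  moreover have "?b \<bullet> x = 0"
    unfolding \<open>x = t *\<^sub>R u\<close> inner_scaleR_left inner_scaleR_right cross2_eq_inner[symmetric]
    by simp
  ultimately show "x \<in> frontier K"
    by (rule frontier_if_supporting_hyperplane)
qed

locale halfplane_cone =
  fixes K :: "(real \<times> real) set" and a \<eta> :: "real \<times> real"
  assumes closed_K: "closed K"
    and convex_cone_K: "convex_cone K"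
    and K_halfplane: "\<And>x. x \<in> K \<Longrightarrow> 0 \<le> a \<bullet> x"
    and \<eta>_in_K: "\<eta> \<in> K"
    and a_\<eta>_pos: "0 < a \<bullet> \<eta>"
begin

lemma a_nonzero: "a \<noteq> 0"
  using a_\<eta>_pos by auto

lemma extreme_rays:
  obtains u v where "u \<in> K" "v \<in> K" "u \<noteq> 0" "v \<noteq> 0"
    "\<And>p. p \<in> K \<Longrightarrow> 0 \<le> cross2 u p" "\<And>p. p \<in> K \<Longrightarrow> cross2 v p \<le> 0"
proof -
  \<comment> \<open>on unit vectors of the half-plane, \<open>cross2 a\<close> increases with the angle from \<open>a\<close>\<close>
  let ?C = "K \<inter> sphere 0 1"
  have normalized: "(1 / norm p) *\<^sub>R p \<in> ?C" if "p \<in> K" "p \<noteq> 0" for p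
    using that by (simp add: convex_cone_scaleR[OF convex_cone_K])
  have "compact ?C"
    using closed_K by (simp add: closed_Int_compact)
  moreover have "?C \<noteq> {}"
    using normalized[OF \<eta>_in_K] a_\<eta>_pos by fastforce
  moreover have "continuous_on ?C (cross2 a)"
    unfolding cross2_def by (intro continuous_intros)
  ultimately obtain u v where u: "u \<in> ?C" "\<And>x. x \<in> ?C \<Longrightarrow> cross2 a u \<le> cross2 a x"
    and v: "v \<in> ?C" "\<And>x. x \<in> ?C \<Longrightarrow> cross2 a x \<le> cross2 a v"
    using continuous_attains_inf[of ?C "cross2 a"] continuous_attains_sup[of ?C "cross2 a"] by blast
  have extreme: "0 \<le> cross2 u p \<and> cross2 v p \<le> 0" if "p \<in> K" for p
  proof (cases "p = 0")
    case False
    let ?p = "(1 / norm p) *\<^sub>R p"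
    have "?p \<in> K" "norm ?p = 1"
      using normalized[OF that False] by auto
    moreover have "u \<in> K" "norm u = 1" "v \<in> K" "norm v = 1"
      using u(1) v(1) by auto
    moreover have "cross2 a u \<le> cross2 a ?p" "cross2 a ?p \<le> cross2 a v"
      using u(2) v(2) normalized[OF that False] by blast+
    ultimately have "0 \<le> cross2 u ?p" "0 \<le> cross2 ?p v"
      by (metis cross2_nonneg_on_half_circle[OF a_nonzero K_halfplane K_halfplane])+
    then show ?thesis
      using False by (simp add: cross2_antisym[of p] zero_le_divide_iff divide_le_0_iff)
  qed simp
  moreover have "u \<in> K" "v \<in> K" "u \<noteq> 0" "v \<noteq> 0"
    using u(1) v(1) by auto
  ultimately show ?thesis
    using that by blast
qed

lemma parallel_in_cone_cases:
  assumes "x \<in> K" "y \<in> K" "x \<noteq> 0" "cross2 x y = 0"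
  shows "y \<in> ray x \<or> (- y \<in> ray x \<and> cross2 x \<eta> \<noteq> 0)"
proof -
  have xy: "(x \<bullet> x) *\<^sub>R y = (x \<bullet> y) *\<^sub>R x"
    by (rule cross2_eq_0_imp_parallel[OF assms(4)])
  have "0 < x \<bullet> x"
    using assms(3) by simp
  have "y = inverse (x \<bullet> x) *\<^sub>R ((x \<bullet> x) *\<^sub>R y)"
    using \<open>0 < x \<bullet> x\<close> by simp
  then have y: "y = ((x \<bullet> y) / (x \<bullet> x)) *\<^sub>R x"
    by (simp add: xy divide_inverse_commute)
  show ?thesis
  proof (cases "0 \<le> x \<bullet> y")
    case True
    then show ?thesis
      using y \<open>0 < x \<bullet> x\<close> by (auto simp: ray_iff)
  next
    case False
    have "- y = (- (x \<bullet> y) / (x \<bullet> x)) *\<^sub>R x"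
      by (subst y) simp
    moreover have "0 \<le> - (x \<bullet> y) / (x \<bullet> x)"
      using False \<open>0 < x \<bullet> x\<close> by (simp add: divide_nonpos_pos)
    ultimately have "- y \<in> ray x"
      unfolding ray_iff by blast
    have "(x \<bullet> x) * (a \<bullet> y) = (x \<bullet> y) * (a \<bullet> x)"
      using arg_cong[OF xy, of "inner a"] by simp
    then have "a \<bullet> x = 0"
      using False \<open>0 < x \<bullet> x\<close> K_halfplane[OF assms(1)] K_halfplane[OF assms(2)]
      by (smt (verit) mult_neg_pos mult_nonneg_nonneg)
    have "cross2 x \<eta> \<noteq> 0"
    proof
      assume "cross2 x \<eta> = 0"
      then have "(x \<bullet> x) * (a \<bullet> \<eta>) = (x \<bullet> \<eta>) * (a \<bullet> x)"
        using arg_cong[OF cross2_eq_0_imp_parallel, of x \<eta> "inner a"] by simp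
      with \<open>a \<bullet> x = 0\<close> \<open>0 < x \<bullet> x\<close> a_\<eta>_pos show False
        by simp
    qed
    with \<open>- y \<in> ray x\<close> show ?thesis by blast
  qed
qed

lemma cross2_eq_0_in_extreme_rays:
  fixes \<sigma> :: real
  assumes "\<sigma> \<noteq> 0" "u \<in> K" "v \<in> K" "u \<noteq> 0" "v \<noteq> 0"
    and u: "\<And>p. p \<in> K \<Longrightarrow> 0 \<le> \<sigma> * cross2 u p"
    and v: "\<And>p. p \<in> K \<Longrightarrow> \<sigma> * cross2 v p \<le> 0"
    and "\<xi> \<in> K" "cross2 u \<xi> = 0"
  shows "\<xi> \<in> ray u \<union> ray v"
proof (cases "\<xi> \<in> ray u")
  case False
  then have "\<xi> \<noteq> 0" by auto
  from False parallel_in_cone_cases[OF assms(2,8,4,9)] have "- \<xi> \<in> ray u" "cross2 u \<eta> \<noteq> 0"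
    by auto
  then obtain t where t: "\<xi> = - (t *\<^sub>R u)" "0 < t"
    using \<open>\<xi> \<noteq> 0\<close> by (auto simp: ray_iff_pos[of "- \<xi>"] minus_equation_iff[of \<xi>])
  have "\<sigma> * cross2 v \<xi> = - (t * (\<sigma> * cross2 v u))"
    using t(1) by simp
  then have "\<sigma> * cross2 v u \<le> 0" "0 \<le> t * (\<sigma> * cross2 v u)"
    using v[OF assms(2)] v[OF assms(8)] by simp_all
  then have "\<sigma> * cross2 v u = 0"
    using mult_pos_neg[OF t(2), of "\<sigma> * cross2 v u"] by linarith
  then have "cross2 u v = 0"
    using assms(1) by (simp add: cross2_antisym[of v])
  from parallel_in_cone_cases[OF assms(2,3,4) this] show ?thesis
  proof
    assume "v \<in> ray u"
    then obtain s where "v = s *\<^sub>R u" "0 < s"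
      using assms(5) by (auto simp: ray_iff_pos)
    moreover have "0 < \<sigma> * cross2 u \<eta>"
      using u[OF \<eta>_in_K] \<open>cross2 u \<eta> \<noteq> 0\<close> assms(1) by (simp add: order_less_le)
    ultimately have "0 < \<sigma> * cross2 v \<eta>"
      by (simp add: mult.left_commute[of \<sigma>])
    with v[OF \<eta>_in_K] have False
      by simp
    then show ?thesis ..
  next
    assume "- v \<in> ray u \<and> cross2 u \<eta> \<noteq> 0"
    then obtain s where "v = - (s *\<^sub>R u)" "0 < s"
      using assms(5) by (auto simp: ray_iff_pos[of "- v"] minus_equation_iff[of v])
    then have "\<xi> = (t / s) *\<^sub>R v"
      using t(1) by simp
    with \<open>0 < s\<close> t(2) have "\<xi> \<in> ray v"
      unfolding ray_iff by (intro exI[of _ "t / s"]) simp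
    then show ?thesis ..
  qed
qed simp

lemma frontier_eq_two_rays:
  obtains u v where "u \<in> K" "v \<in> K" "u \<noteq> 0" "v \<noteq> 0" "frontier K = ray u \<union> ray v"
proof -
  obtain u v where uv: "u \<in> K" "v \<in> K" "u \<noteq> 0" "v \<noteq> 0"
    and u: "\<And>p. p \<in> K \<Longrightarrow> 0 \<le> cross2 u p" and v: "\<And>p. p \<in> K \<Longrightarrow> cross2 v p \<le> 0"
    by (rule extreme_rays) blast
  have "ray u \<union> ray v \<subseteq> frontier K"
    using ray_subset_frontier_if_extreme[OF convex_cone_K, of u 1]
      ray_subset_frontier_if_extreme[OF convex_cone_K, of v "-1"] uv u v by auto
  moreover have "frontier K \<subseteq> ray u \<union> ray v"
  proof
    fix \<xi> assume "\<xi> \<in> frontier K"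
    then have "\<xi> \<in> K" "\<xi> \<notin> interior K"
      using closed_K by (simp_all add: frontier_def closure_closed)
    show "\<xi> \<in> ray u \<union> ray v"
    proof (rule ccontr)
      assume "\<xi> \<notin> ray u \<union> ray v"
      then have "cross2 u \<xi> \<noteq> 0" "cross2 v \<xi> \<noteq> 0"
        using cross2_eq_0_in_extreme_rays[of 1 u v \<xi>] cross2_eq_0_in_extreme_rays[of "-1" v u \<xi>]
          uv u v \<open>\<xi> \<in> K\<close> by auto
      then have "0 < cross2 u \<xi>" "0 < cross2 \<xi> v"
        using u[OF \<open>\<xi> \<in> K\<close>] v[OF \<open>\<xi> \<in> K\<close>] by (simp_all add: cross2_antisym[of \<xi>])
      then have "\<xi> \<in> interior K"
        by (rule interior_if_strictly_between[OF convex_cone_K uv(1,2) \<open>\<xi> \<in> K\<close>])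
      with \<open>\<xi> \<notin> interior K\<close> show False ..
    qed
  qed
  ultimately show ?thesis
    using that uv by blast
qed

end

section \<open>The antipolar and the bipolar theorem\<close>

text \<open>The pairing \<open>\<langle>\<xi>, z\<rangle>\<close> of the statement is \<open>\<xi> \<bullet> reflect z\<close>.\<close>

definition reflect :: "real \<times> real \<Rightarrow> real \<times> real" where
  "reflect z = (fst z, - snd z)"

lemma inner_reflect_right: "\<xi> \<bullet> reflect z = reflect \<xi> \<bullet> z"
  by (simp add: reflect_def inner_prod_def)

lemma inner_reflect_reflect [simp]: "reflect \<xi> \<bullet> reflect z = \<xi> \<bullet> z"
  by (simp add: reflect_def inner_prod_def)

lemma reflect_reflect [simp]: "reflect (reflect z) = z"
  by (simp add: reflect_def)

lemma reflect_scaleR [simp]: "reflect (c *\<^sub>R z) = c *\<^sub>R reflect z"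
  by (simp add: reflect_def)

lemma inner_reflect_swap: "\<xi> \<bullet> reflect z = z \<bullet> reflect \<xi>"
  by (simp add: reflect_def inner_prod_def)

lemma reflect_eq_0_iff [simp]: "reflect z = 0 \<longleftrightarrow> z = 0"
  by (cases z) (simp add: reflect_def zero_prod_def)

lemma norm_reflect [simp]: "norm (reflect z) = norm z"
  by (cases z) (simp add: reflect_def norm_Pair)

lemma antipolar_iff: "\<xi> \<in> antipolar A \<longleftrightarrow> (\<forall>z\<in>A. 1 \<le> \<xi> \<bullet> reflect z)"
  by (cases \<xi>) (auto simp: antipolar_def reflect_def inner_prod_def)

lemma antipolar_eq_Inter_halfspaces: "antipolar A = (\<Inter>z\<in>A. {\<xi>. reflect z \<bullet> \<xi> \<ge> 1})"
  by (simp add: antipolar_iff set_eq_iff inner_commute)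

lemma closed_antipolar: "closed (antipolar A)"
  by (simp add: antipolar_eq_Inter_halfspaces closed_INT closed_halfspace_ge)

lemma convex_antipolar: "convex (antipolar A)"
  by (simp add: antipolar_eq_Inter_halfspaces convex_INT convex_halfspace_ge)

lemma prop_iD:
  assumes "prop_i A"
  shows "A \<noteq> {}" "convex A" "closed A" "0 \<notin> A" "\<And>c x. 1 < c \<Longrightarrow> x \<in> A \<Longrightarrow> c *\<^sub>R x \<in> A"
  using assms unfolding prop_i_def by auto

lemma nonneg_if_scaled_lower_bound:
  fixes L r :: real
  assumes "\<And>c. 1 < c \<Longrightarrow> L \<le> c * r"
  shows "0 \<le> r"
proof (rule ccontr)
  assume "\<not> 0 \<le> r"
  define c where "c = max 2 ((L - 1) / r)"
  have "1 < c" by (simp add: c_def)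
  have "c * r \<le> (L - 1) / r * r"
    using \<open>\<not> 0 \<le> r\<close> by (intro mult_right_mono_neg) (auto simp: c_def)
  with \<open>\<not> 0 \<le> r\<close> assms[OF \<open>1 < c\<close>] show False by simp
qed

lemma inner_nonneg_if_bounded_below:
  assumes "prop_i A" "\<And>x. x \<in> A \<Longrightarrow> L \<le> b \<bullet> x" "x \<in> A"
  shows "0 \<le> b \<bullet> x"
proof (rule nonneg_if_scaled_lower_bound)
  fix c :: real assume "1 < c"
  then show "L \<le> c * (b \<bullet> x)"
    using assms(2)[OF prop_iD(5)[OF assms(1) _ assms(3)]] by simp
qed

lemma antipolar_nonempty:
  assumes "prop_i A" shows "antipolar A \<noteq> {}"
proof -
  obtain a b where "0 < b" "\<forall>x\<in>A. b < a \<bullet> x"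
    using separating_hyperplane_closed_0[OF prop_iD(2-4)[OF assms]] by blast
  then have "(1 / b) *\<^sub>R reflect a \<in> antipolar A"
    unfolding antipolar_iff inner_reflect_right by (simp add: field_simps less_imp_le)
  then show ?thesis by blast
qed

lemma prop_i_antipolar:
  assumes "prop_i A" shows "prop_i (antipolar A)"
  unfolding prop_i_def
proof (intro conjI allI impI subsetI)
  show "antipolar A \<noteq> {}" "convex (antipolar A)" "closed (antipolar A)"
    using assms by (simp_all add: antipolar_nonempty convex_antipolar closed_antipolar)
  show "0 \<notin> antipolar A"
    using prop_iD(1)[OF assms] by (auto simp: antipolar_iff)
  fix c :: real and \<xi>
  assume "1 < c" "\<xi> \<in> (\<lambda>x. c *\<^sub>R x) ` antipolar A"
  then obtain \<eta> where "\<xi> = c *\<^sub>R \<eta>" "\<eta> \<in> antipolar A" by blast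
  have "1 \<le> c * (\<eta> \<bullet> reflect z)" if "z \<in> A" for z
    using \<open>1 < c\<close> \<open>\<eta> \<in> antipolar A\<close> that mult_mono[of 1 c 1 "\<eta> \<bullet> reflect z"]
    by (simp add: antipolar_iff)
  then show "\<xi> \<in> antipolar A"
    by (simp add: antipolar_iff \<open>\<xi> = c *\<^sub>R \<eta>\<close>)
qed

lemma antipolar_antipolar:
  assumes "prop_i A" shows "antipolar (antipolar A) = A"
proof
  show "A \<subseteq> antipolar (antipolar A)"
    by (auto simp: antipolar_iff) (metis inner_reflect_swap)
  show "antipolar (antipolar A) \<subseteq> A"
  proof
    fix z assume z: "z \<in> antipolar (antipolar A)"
    show "z \<in> A"
    proof (rule ccontr)
      assume "z \<notin> A"
      then obtain b c where bz: "b \<bullet> z < c" and bA: "\<forall>x\<in>A. c < b \<bullet> x"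
        using separating_hyperplane_closed_point[OF prop_iD(2,3)[OF assms]] by blast
      have b_nonneg: "0 \<le> b \<bullet> x" if "x \<in> A" for x
        using inner_nonneg_if_bounded_below[OF assms _ that, of c] bA by (simp add: less_imp_le)
      obtain \<xi> where "\<xi> \<in> antipolar A" "\<xi> \<bullet> reflect z < 1"
      \<comment> \<open>if \<open>c \<le> 0\<close>, push a point of the antipolar along \<open>reflect b\<close>, which is \<open>\<ge> 0\<close> on A\<close>
      proof (cases "0 < c")
        case True
        then have "(1 / c) *\<^sub>R reflect b \<in> antipolar A"
          using bA by (simp add: antipolar_iff inner_reflect_right field_simps less_imp_le)
        moreover have "(1 / c) *\<^sub>R reflect b \<bullet> reflect z < 1"
          using True bz by (simp add: field_simps)
        ultimately show ?thesis by (rule that)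
      next
        case False
        obtain \<eta> where \<eta>: "\<eta> \<in> antipolar A" using antipolar_nonempty[OF assms] by blast
        define t where "t = (\<bar>\<eta> \<bullet> reflect z\<bar> + 1) / - (b \<bullet> z)"
        have "b \<bullet> z < 0" using False bz by simp
        then have "0 \<le> t" unfolding t_def by (intro divide_nonneg_pos) auto
        have "\<eta> + t *\<^sub>R reflect b \<in> antipolar A"
          using \<eta> b_nonneg \<open>0 \<le> t\<close> by (simp add: antipolar_iff inner_add_left add_increasing2)
        moreover have "t * (b \<bullet> z) = - (\<bar>\<eta> \<bullet> reflect z\<bar> + 1)"
          using \<open>b \<bullet> z < 0\<close> by (simp add: t_def)
        then have "(\<eta> + t *\<^sub>R reflect b) \<bullet> reflect z < 1"
          by (simp add: inner_add_left)
        ultimately show ?thesis by (rule that)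
      qed
      moreover from this(1) have "1 \<le> z \<bullet> reflect \<xi>"
        using z by (simp add: antipolar_iff)
      ultimately show False
        by (simp add: inner_reflect_swap[of \<xi>])
    qed
  qed
qed

section \<open>The dual cone\<close>

definition dual_cone :: "(real \<times> real) set \<Rightarrow> (real \<times> real) set" where
  "dual_cone A = {\<xi>. \<forall>z\<in>A. 0 \<le> \<xi> \<bullet> reflect z}"

lemma closed_dual_cone: "closed (dual_cone A)"
proof -
  have "dual_cone A = (\<Inter>z\<in>A. {\<xi>. reflect z \<bullet> \<xi> \<ge> 0})"
    by (simp add: dual_cone_def set_eq_iff inner_commute)
  then show ?thesis by (simp add: closed_INT closed_halfspace_ge)
qed

lemma convex_cone_dual_cone: "convex_cone (dual_cone A)"
  by (auto simp: convex_cone_iff dual_cone_def inner_add_left)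

lemma antipolar_subset_dual_cone: "antipolar A \<subseteq> dual_cone A"
  by (force simp: antipolar_iff dual_cone_def)

lemma cone_cl_antipolar:
  assumes "prop_i A" shows "cone_cl (antipolar A) = dual_cone A"
proof
  have "{t *\<^sub>R x | t x. 0 \<le> t \<and> x \<in> antipolar A} \<subseteq> dual_cone A"
    by (blast intro: convex_cone_scaleR[OF convex_cone_dual_cone]
        antipolar_subset_dual_cone[THEN subsetD])
  then show "cone_cl (antipolar A) \<subseteq> dual_cone A"
    unfolding cone_cl_def by (rule closure_minimal[OF _ closed_dual_cone])
  show "dual_cone A \<subseteq> cone_cl (antipolar A)"
  proof
    fix \<xi> assume \<xi>: "\<xi> \<in> dual_cone A"
    obtain \<eta> where \<eta>: "\<eta> \<in> antipolar A" using antipolar_nonempty[OF assms] by blast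
    define x where "x n = \<xi> + inverse (real (Suc n)) *\<^sub>R \<eta>" for n
    have "x n \<in> {t *\<^sub>R y | t y. 0 \<le> t \<and> y \<in> antipolar A}" for n
    proof -
      have "1 \<le> (real (Suc n) *\<^sub>R \<xi> + \<eta>) \<bullet> reflect z" if "z \<in> A" for z
        using \<xi> \<eta> that unfolding antipolar_iff dual_cone_def inner_add_left inner_scaleR_left
        by (intro add_increasing) auto
      then have "real (Suc n) *\<^sub>R \<xi> + \<eta> \<in> antipolar A"
        by (simp add: antipolar_iff)
      moreover have "x n = inverse (real (Suc n)) *\<^sub>R (real (Suc n) *\<^sub>R \<xi> + \<eta>)"
        by (simp add: x_def scaleR_add_right)
      moreover have "0 \<le> inverse (real (Suc n))" by simp
      ultimately show ?thesis by blast
    qed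
    moreover have "x \<longlonglongrightarrow> \<xi>"
      unfolding x_def
      using tendsto_add[OF tendsto_const tendsto_scaleR[OF LIMSEQ_inverse_real_of_nat tendsto_const]]
      by simp
    ultimately show "\<xi> \<in> cone_cl (antipolar A)"
      unfolding cone_cl_def closure_sequential by blast
  qed
qed

lemma frontier_dual_cone_two_rays:
  assumes "prop_i A"
  obtains u v where "u \<in> dual_cone A" "v \<in> dual_cone A" "u \<noteq> 0" "v \<noteq> 0"
    "frontier (dual_cone A) = ray u \<union> ray v"
proof -
  obtain z where "z \<in> A" using prop_iD(1)[OF assms] by blast
  obtain \<eta> where "\<eta> \<in> antipolar A" using antipolar_nonempty[OF assms] by blast
  interpret halfplane_cone "dual_cone A" "reflect z" \<eta>
  proof
    show "closed (dual_cone A)" "convex_cone (dual_cone A)"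
      by (simp_all add: closed_dual_cone convex_cone_dual_cone)
    show "0 \<le> reflect z \<bullet> x" if "x \<in> dual_cone A" for x
      using that \<open>z \<in> A\<close> by (simp add: dual_cone_def inner_commute)
    show "\<eta> \<in> dual_cone A"
      using \<open>\<eta> \<in> antipolar A\<close> antipolar_subset_dual_cone by blast
    have "1 \<le> \<eta> \<bullet> reflect z"
      using \<open>\<eta> \<in> antipolar A\<close> \<open>z \<in> A\<close> by (simp add: antipolar_iff)
    then show "0 < reflect z \<bullet> \<eta>"
      by (simp add: inner_commute)
  qed
  from frontier_eq_two_rays that show ?thesis by blast
qed

lemma prop_star_iff_dual_cone_pos:
  assumes "prop_i A"
  shows "prop_star A \<longleftrightarrow> (\<forall>\<xi>\<in>dual_cone A - {0}. \<forall>z\<in>A. 0 < \<xi> \<bullet> reflect z)"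
proof
  assume star: "prop_star A"
  show "\<forall>\<xi>\<in>dual_cone A - {0}. \<forall>z\<in>A. 0 < \<xi> \<bullet> reflect z"
  proof (intro ballI)
    fix \<xi> z assume \<xi>: "\<xi> \<in> dual_cone A - {0}" and "z \<in> A"
    show "0 < \<xi> \<bullet> reflect z"
    proof (rule ccontr)
      assume "\<not> 0 < \<xi> \<bullet> reflect z"
      moreover have "0 \<le> \<xi> \<bullet> reflect z"
        using \<xi> \<open>z \<in> A\<close> by (simp add: dual_cone_def)
      ultimately have "reflect \<xi> \<bullet> (2 *\<^sub>R z) = 0"
        by (simp add: inner_reflect_right)
      moreover have "0 \<le> reflect \<xi> \<bullet> x" if "x \<in> A" for x
        using \<xi> that by (simp add: dual_cone_def inner_reflect_right)
      ultimately have "2 *\<^sub>R z \<in> frontier A"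
        using \<xi> prop_iD(5)[OF assms _ \<open>z \<in> A\<close>, of 2]
        by (intro frontier_if_supporting_hyperplane[of "reflect \<xi>"]) auto
      moreover have "(\<lambda>x. 2 *\<^sub>R x) ` A \<inter> frontier A = {}"
        using star by (simp add: prop_star_def)
      ultimately show False
        using \<open>z \<in> A\<close> by blast
    qed
  qed
next
  assume pos: "\<forall>\<xi>\<in>dual_cone A - {0}. \<forall>z\<in>A. 0 < \<xi> \<bullet> reflect z"
  show "prop_star A"
    unfolding prop_star_def
  proof (intro allI impI equals0I)
    fix c :: real and y assume "1 < c" "y \<in> (\<lambda>x. c *\<^sub>R x) ` A \<inter> frontier A"
    then obtain x where "x \<in> A" "c *\<^sub>R x \<in> frontier A" by blast
    then obtain a where "a \<noteq> 0" and a: "\<And>y. y \<in> A \<Longrightarrow> a \<bullet> (c *\<^sub>R x) \<le> a \<bullet> y"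
      using supporting_hyperplane_frontier[OF prop_iD(2)[OF assms]] by blast
    have a_nonneg: "0 \<le> a \<bullet> y" if "y \<in> A" for y
      using inner_nonneg_if_bounded_below[OF assms a that] .
    have "(c - 1) * (a \<bullet> x) \<le> 0"
      using a[OF \<open>x \<in> A\<close>] by (simp add: algebra_simps)
    then have "a \<bullet> x = 0"
      using a_nonneg[OF \<open>x \<in> A\<close>] \<open>1 < c\<close> by (simp add: mult_le_0_iff)
    moreover have "reflect a \<in> dual_cone A - {0}"
      using \<open>a \<noteq> 0\<close> a_nonneg by (simp add: dual_cone_def)
    with pos \<open>x \<in> A\<close> have "0 < reflect a \<bullet> reflect x" by blast
    with \<open>a \<bullet> x = 0\<close> show False by simp
  qed
qed

section \<open>Properties \<open>(*)\<close> and \<open>(**)\<close>\<close>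

lemma setdist_ray_antipolar_ge:
  assumes "prop_i A" "z \<in> A" "u \<bullet> reflect z = 0"
  shows "1 / norm z \<le> setdist (ray u) (antipolar A)"
proof -
  have "0 < norm z"
    using prop_iD(4)[OF assms(1)] assms(2) by auto
  have "1 / norm z \<le> dist x \<eta>" if x: "x \<in> ray u" and \<eta>: "\<eta> \<in> antipolar A" for x \<eta>
  proof -
    obtain t where "x = t *\<^sub>R u"
      using x by (auto simp: ray_iff)
    have "1 \<le> \<eta> \<bullet> reflect z"
      using \<eta> assms(2) by (simp add: antipolar_iff)
    also have "\<dots> = (\<eta> - x) \<bullet> reflect z"
      using \<open>x = t *\<^sub>R u\<close> assms(3) by (simp add: inner_diff_left)
    also have "\<dots> \<le> dist x \<eta> * norm z"
      using norm_cauchy_schwarz[of "\<eta> - x" "reflect z"] by (simp add: dist_norm norm_minus_commute)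
    finally show ?thesis
      using \<open>0 < norm z\<close> by (simp add: field_simps)
  qed
  moreover have "ray u \<noteq> {}"
    using zero_in_ray by blast
  ultimately show ?thesis
    using antipolar_nonempty[OF assms(1)] by (simp add: le_setdist_iff)
qed

lemma setdist_ray_antipolar_eq_0:
  assumes "prop_i A" "\<And>z. z \<in> A \<Longrightarrow> 0 < u \<bullet> reflect z"
  shows "setdist (ray u) (antipolar A) = 0"
proof (rule ccontr)
  let ?D = "\<Union>\<eta>\<in>antipolar A. \<Union>x\<in>ray u. {\<eta> - x}"
  assume "setdist (ray u) (antipolar A) \<noteq> 0"
  then have "0 < setdist (ray u) (antipolar A)"
    using setdist_pos_le[of "ray u" "antipolar A"] by linarith
  then have "0 \<notin> closure ?D"
    by (rule zero_notin_closure_differences)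
  moreover have "convex (closure ?D)"
    by (intro convex_closure convex_differences convex_antipolar convex_ray)
  ultimately obtain a b where "0 < b" and sep: "\<forall>y\<in>closure ?D. b < a \<bullet> y"
    using separating_hyperplane_closed_0[of "closure ?D"] closed_closure by blast
  have sep': "b < a \<bullet> \<eta> - t * (a \<bullet> u)" if "\<eta> \<in> antipolar A" "0 \<le> t" for \<eta> t
  proof -
    have "\<eta> - t *\<^sub>R u \<in> closure ?D"
      using that closure_subset by (fastforce simp: ray_iff)
    with sep have "b < a \<bullet> (\<eta> - t *\<^sub>R u)" by blast
    then show ?thesis by (simp add: inner_diff_right)
  qed
  obtain \<eta>0 where "\<eta>0 \<in> antipolar A"
    using antipolar_nonempty[OF assms(1)] by blast
  have "0 \<le> - (a \<bullet> u)"
  proof (rule nonneg_if_scaled_lower_bound)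
    fix c :: real assume "1 < c"
    then show "b - a \<bullet> \<eta>0 \<le> c * - (a \<bullet> u)"
      using sep'[OF \<open>\<eta>0 \<in> antipolar A\<close>, of c] by simp
  qed
  have "1 \<le> ((1 / b) *\<^sub>R reflect a) \<bullet> reflect \<eta>" if "\<eta> \<in> antipolar A" for \<eta>
    using sep'[OF that, of 0] \<open>0 < b\<close> by (simp add: field_simps)
  then have "(1 / b) *\<^sub>R reflect a \<in> antipolar (antipolar A)"
    by (simp add: antipolar_iff)
  then have "(1 / b) *\<^sub>R reflect a \<in> A"
    using antipolar_antipolar[OF assms(1)] by simp
  from assms(2)[OF this] \<open>0 < b\<close> \<open>0 \<le> - (a \<bullet> u)\<close> show False
    by (simp add: inner_commute zero_less_divide_iff)
qed

lemma prop_starstar_antipolar_if_prop_star: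
  assumes "prop_i A" "prop_star A"
  shows "prop_starstar (antipolar A)"
proof -
  obtain u v where uv: "u \<in> dual_cone A" "v \<in> dual_cone A" "u \<noteq> 0" "v \<noteq> 0"
    and frontier: "frontier (dual_cone A) = ray u \<union> ray v"
    by (rule frontier_dual_cone_two_rays[OF assms(1)])
  have "setdist (ray w) (antipolar A) = 0" if "w \<in> {u, v}" for w
    using that uv assms(2) by (intro setdist_ray_antipolar_eq_0[OF assms(1)])
      (auto simp: prop_star_iff_dual_cone_pos[OF assms(1)])
  then show ?thesis
    unfolding prop_starstar_def cone_cl_antipolar[OF assms(1)] using uv(3,4) frontier by blast
qed

lemma prop_star_if_prop_starstar_antipolar:
  assumes "prop_i A" "prop_starstar (antipolar A)"
  shows "prop_star A"
  unfolding prop_star_iff_dual_cone_pos[OF assms(1)]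
proof (intro ballI)
  obtain u0 u1 where frontier: "frontier (dual_cone A) = ray u0 \<union> ray u1"
    and dist0: "setdist (ray u0) (antipolar A) = 0" "setdist (ray u1) (antipolar A) = 0"
    using assms(2) unfolding prop_starstar_def cone_cl_antipolar[OF assms(1)] by blast
  fix \<xi> z assume \<xi>: "\<xi> \<in> dual_cone A - {0}" and "z \<in> A"
  then have "z \<noteq> 0" "0 \<le> \<xi> \<bullet> reflect z"
    using prop_iD(4)[OF assms(1)] by (auto simp: dual_cone_def)
  show "0 < \<xi> \<bullet> reflect z"
  proof (rule ccontr)
    assume "\<not> 0 < \<xi> \<bullet> reflect z"
    with \<open>0 \<le> \<xi> \<bullet> reflect z\<close> have "reflect z \<bullet> \<xi> = 0"
      by (simp add: inner_commute)
    then have "\<xi> \<in> frontier (dual_cone A)"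
      using \<xi> \<open>z \<noteq> 0\<close> \<open>z \<in> A\<close>
      by (intro frontier_if_supporting_hyperplane[of "reflect z"]) (auto simp: dual_cone_def inner_commute)
    then obtain w where "w \<in> {u0, u1}" "\<xi> \<in> ray w"
      using frontier by blast
    then obtain t where "\<xi> = t *\<^sub>R w" "0 < t"
      using \<xi> ray_iff_pos[of \<xi> w] by blast
    with \<open>reflect z \<bullet> \<xi> = 0\<close> have "w \<bullet> reflect z = 0"
      by (simp add: inner_commute)
    then have "1 / norm z \<le> setdist (ray w) (antipolar A)"
      by (rule setdist_ray_antipolar_ge[OF assms(1) \<open>z \<in> A\<close>])
    with \<open>w \<in> {u0, u1}\<close> dist0 \<open>z \<noteq> 0\<close> show False
      by auto
  qed
qed

lemma prop_star_iff_prop_starstar_antipolar: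
  assumes "prop_i A"
  shows "prop_star A \<longleftrightarrow> prop_starstar (antipolar A)"
  using prop_starstar_antipolar_if_prop_star prop_star_if_prop_starstar_antipolar assms by blast

theorem theorem4:
  fixes \<Omega> :: "(real \<times> real) set"
  assumes "prop_i \<Omega>"
  shows "(prop_star \<Omega> \<longleftrightarrow> prop_starstar (antipolar \<Omega>)) \<and>
         (prop_star (antipolar \<Omega>) \<longleftrightarrow> prop_starstar \<Omega>)"
  using prop_star_iff_prop_starstar_antipolar[OF assms]
    prop_star_iff_prop_starstar_antipolar[OF prop_i_antipolar[OF assms]]
    antipolar_antipolar[OF assms]
  by simp

end
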